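(* Let $p$ be an odd prime, $n\ge 1$, and $H^*(BA_n)=\mathbb{Z}/p[t_1,\dots,t_n]\otimes\Lambda(dt_1,\dots,dt_n)$ the mod $p$ cohomology of the classifying space of the elementary abelian $p$-group $A_n$ of rank $n$. Let $u_n=dt_1\cdots dt_n$ and $e_n=Q_0Q_1\cdots Q_{n-1}u_n$. For subsets $I,J$ of $\Delta_n=\{0,1,\dots,n-1\}$: if $I\cup J\neq\Delta_n$, then $Q_Iu_n\cdot Q_Ju_n=0$. If $I\cup J=\Delta_n$, then \[Q_Iu_n\cdot Q_Ju_n=(-1)^{nr+r^2}\,\mathrm{sgn}(K,I\setminus K)\,\mathrm{sgn}(I\setminus K,J)\,e_n\,Q_Ku_n,\] where $K=I\cap J$ and $r$ is the number of elements of $I\setminus K$.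
   Context: Here $dt_i$ form a basis of $H^1(BA_n)$ and $t_i=\beta\, dt_i$ with $\beta$ the Bockstein. $Q_i$ are the Milnor operations: $Q_0=\beta$ and $Q_{i+1}=\wp^{p^i}Q_i-Q_i\wp^{p^i}$, where $\wp^j$ is the $j$-th Steenrod reduced power. For $I=\{i_1,\dots,i_r\}\subseteq\Delta_n$ with $i_1<\dots<i_r$, $Q_Iu_n=Q_{i_1}\cdots Q_{i_r}u_n$, and $Q_\emptyset u_n=u_n$. For disjoint subsets $I=\{i_1<\dots<i_r\}$ and $J=\{j_1<\dots<j_s\}$ of $\Delta_n$, $\mathrm{sgn}(I,J)$ denotes the sign of the permutation sending $(1,\dots,r,r+1,\dots,r+s)$ to $(i_1,\dots,i_r,j_1,\dots,j_s)$ (i.e. the sign of the permutation sorting the sequence $i_1,\dots,i_r,j_1,\dots,j_s$ into increasing order); if $I$ or $J$ is empty, $\mathrm{sgn}(I,J)=1$. *)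

theory Defs
  imports "HOL-Library.Poly_Mapping" "Berlekamp_Zassenhaus.Finite_Field"
begin

text \<open>Model of H^*(BA_n; Z/p) = Z/p[t_0,...,t_(n-1)] tensor Lambda(dt_0,...,dt_(n-1)).
  A monomial t^a dt_S (a an exponent vector, S a set of indices, the exterior factors
  written in increasing order of index) is a pair (a, S); a cohomology class is a
  finitely supported coefficient function on monomials.\<close>

type_synonym mono = "(nat \<Rightarrow>\<^sub>0 nat) \<times> nat set"
type_synonym 'a coh = "mono \<Rightarrow>\<^sub>0 'a"

definition inv_count :: "nat set \<Rightarrow> nat set \<Rightarrow> nat" where
  "inv_count S T = card {(s, t). s \<in> S \<and> t \<in> T \<and> t < s}"

text \<open>sgn(S,T): sign of the permutation sorting the sequence s_1..s_r t_1..t_s.\<close>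
definition sgn :: "nat set \<Rightarrow> nat set \<Rightarrow> int" where
  "sgn S T = (-1) ^ inv_count S T"

definition smul :: "'a::ring_1 \<Rightarrow> 'a coh \<Rightarrow> 'a coh" where
  "smul c x = Poly_Mapping.map (\<lambda>d. c * d) x"

text \<open>Product of monomials in the graded commutative algebra (t's even, dt's odd).\<close>
definition mono_mult :: "mono \<Rightarrow> mono \<Rightarrow> 'a::ring_1 coh" where
  "mono_mult m m' = (if snd m \<inter> snd m' = {}
      then Poly_Mapping.single (fst m + fst m', snd m \<union> snd m') (of_int (sgn (snd m) (snd m')))
      else 0)"

definition cmult :: "'a::ring_1 coh \<Rightarrow> 'a coh \<Rightarrow> 'a coh" where
  "cmult x y = (\<Sum>m\<in>Poly_Mapping.keys x. \<Sum>m'\<in>Poly_Mapping.keys y. smul (Poly_Mapping.lookup x m * Poly_Mapping.lookup y m') (mono_mult m m'))"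

definition lin_ext :: "(mono \<Rightarrow> 'a::ring_1 coh) \<Rightarrow> 'a coh \<Rightarrow> 'a coh" where
  "lin_ext L x = (\<Sum>m\<in>Poly_Mapping.keys x. smul (Poly_Mapping.lookup x m) (L m))"

text \<open>Bockstein: the derivation (of degree 1, Koszul signs) with beta(dt_j) = t_j, beta(t_j) = 0.\<close>
definition bock_mono :: "mono \<Rightarrow> 'a::ring_1 coh" where
  "bock_mono m = (\<Sum>j\<in>snd m. Poly_Mapping.single
       (fst m + Poly_Mapping.single j 1, snd m - {j}) (of_int ((-1) ^ card {s\<in>snd m. s < j})))"

text \<open>Reduced power P^k: degree-2k part of the total power operation, i.e. the ring
  endomorphism with t_j -> t_j + t_j^p, dt_j -> dt_j (Cartan formula together with
  P^0 = id, P^1 t = t^p, P^k t = 0 for k > 1, P^k dt = 0 for k > 0).\<close>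
definition pow_mono :: "nat \<Rightarrow> nat \<Rightarrow> mono \<Rightarrow> 'a::ring_1 coh" where
  "pow_mono p k m = (\<Sum>b\<in>{b :: nat \<Rightarrow>\<^sub>0 nat. (\<forall>j. Poly_Mapping.lookup b j \<le> Poly_Mapping.lookup (fst m) j) \<and>
        (\<Sum>j\<in>Poly_Mapping.keys b. Poly_Mapping.lookup b j) = k}.
      Poly_Mapping.single (fst m + Poly_Mapping.map (\<lambda>e. (p - 1) * e) b, snd m)
        (of_nat (\<Prod>j\<in>Poly_Mapping.keys (fst m). Poly_Mapping.lookup (fst m) j choose Poly_Mapping.lookup b j)))"

definition bockstein :: "'a::ring_1 coh \<Rightarrow> 'a coh" where
  "bockstein = lin_ext bock_mono"

definition redpow :: "nat \<Rightarrow> nat \<Rightarrow> 'a::ring_1 coh \<Rightarrow> 'a coh" where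
  "redpow p k = lin_ext (pow_mono p k)"

primrec milnorQ :: "nat \<Rightarrow> nat \<Rightarrow> 'a::ring_1 coh \<Rightarrow> 'a coh" where
  "milnorQ p 0 = bockstein"
| "milnorQ p (Suc i) = (\<lambda>x. redpow p (p ^ i) (milnorQ p i x) - milnorQ p i (redpow p (p ^ i) x))"

definition u :: "nat \<Rightarrow> 'a::ring_1 coh" where
  "u n = Poly_Mapping.single (0, {..<n}) 1"

definition QI :: "nat \<Rightarrow> nat \<Rightarrow> nat set \<Rightarrow> 'a::ring_1 coh" where
  "QI p n I = foldr (milnorQ p) (sorted_list_of_set I) (u n)"

definition e :: "nat \<Rightarrow> nat \<Rightarrow> 'a::ring_1 coh" where
  "e p n = QI p n {..<n}"

end

theory Submission
  imports Defs
begin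

text \<open>On this model of \<open>H\<^sup>*(BA\<^sub>n)\<close> the Milnor operation \<open>Q\<^sub>i\<close> is the derivation of odd degree with
  \<open>dt\<^sub>j \<mapsto> t\<^sub>j\<^sup>p\<^sup>^\<^sup>i\<close> and \<open>t\<^sub>j \<mapsto> 0\<close>: by induction on \<open>i\<close>, since \<open>Q\<^sub>i\<^sub>+\<^sub>1 = [P\<^sup>p\<^sup>^\<^sup>i, Q\<^sub>i]\<close> and
  \<open>(1 + X)\<^sup>c\<^sup>+\<^sup>p\<^sup>^\<^sup>i = (1 + X)\<^sup>c (1 + X\<^sup>p\<^sup>^\<^sup>i)\<close> mod \<open>p\<close>. Hence the \<open>Q\<^sub>i\<close> satisfy the Leibniz rule,
  anticommute, and square to zero for odd \<open>p\<close>.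

  The product formula then follows by induction on \<open>|I - J|\<close>. For \<open>i \<in> I - J\<close> write
  \<open>Q\<^sub>I u\<^sub>n = \<plusminus>Q\<^sub>i Q\<^sub>I\<^sub>-\<^sub>i u\<^sub>n\<close> and move \<open>Q\<^sub>i\<close> across the product by the Leibniz rule: on the right it
  turns \<open>Q\<^sub>J u\<^sub>n\<close> into \<open>\<plusminus>Q\<^sub>J\<^sub>+\<^sub>i u\<^sub>n\<close>, while \<open>Q\<^sub>I\<^sub>-\<^sub>i u\<^sub>n \<cdot> Q\<^sub>J u\<^sub>n\<close> vanishes by induction because
  \<open>(I - i) \<union> J\<close> misses \<open>i\<close>. In the base case \<open>I \<subseteq> J\<close> the product is \<open>e\<^sub>n Q\<^sub>I u\<^sub>n\<close> if \<open>J = \<Delta>\<^sub>n\<close>,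
  \<open>e\<^sub>n\<close> having no exterior factors, and zero otherwise.\<close>

abbreviation keys :: "('a \<Rightarrow>\<^sub>0 'b::zero) \<Rightarrow> 'a set" where
  "keys \<equiv> Poly_Mapping.keys"
abbreviation lookup :: "('a \<Rightarrow>\<^sub>0 'b::zero) \<Rightarrow> 'a \<Rightarrow> 'b" where
  "lookup \<equiv> Poly_Mapping.lookup"
abbreviation single :: "'a \<Rightarrow> 'b \<Rightarrow> 'a \<Rightarrow>\<^sub>0 'b::zero" where
  "single \<equiv> Poly_Mapping.single"

section \<open>Linear extensions\<close>

lemma lookup_smul [simp]: "lookup (smul c x) m = c * lookup x m"
  by (simp add: smul_def Poly_Mapping.map.rep_eq when_def)

lemma smul_add: "smul c (x + y) = smul c x + smul (c::'a::ring_1) y"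
  by (rule poly_mapping_eqI) (simp add: lookup_add algebra_simps)

lemma smul_add_left: "smul (c + d) x = smul c x + smul (d::'a::ring_1) x"
  by (rule poly_mapping_eqI) (simp add: lookup_add algebra_simps)

lemma smul_diff: "smul c (x - y) = smul c x - smul (c::'a::ring_1) y"
  by (rule poly_mapping_eqI) (simp add: lookup_minus algebra_simps)

lemma smul_uminus: "smul c (- x) = - smul c (x::'a::ring_1 coh)"
  by (rule poly_mapping_eqI) simp

lemma smul_uminus_left: "smul (- c) x = - smul c (x::'a::ring_1 coh)"
  by (rule poly_mapping_eqI) simp

lemma smul_zero [simp]: "smul c 0 = (0::'a::ring_1 coh)"
  by (rule poly_mapping_eqI) simp

lemma smul_zero_left [simp]: "smul 0 x = (0::'a::ring_1 coh)"
  by (rule poly_mapping_eqI) simp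

lemma smul_one [simp]: "smul 1 x = (x::'a::ring_1 coh)"
  by (rule poly_mapping_eqI) simp

lemma smul_smul [simp]: "smul c (smul d x) = smul (c * d) (x::'a::ring_1 coh)"
  by (rule poly_mapping_eqI) (simp add: mult.assoc)

lemma smul_single [simp]: "smul c (single m d) = single m (c * (d::'a::ring_1))"
  by (rule poly_mapping_eqI) (simp add: lookup_single when_def)

lemma smul_sum: "smul c (sum f A) = (\<Sum>a\<in>A. smul (c::'a::ring_1) (f a))"
  by (induction A rule: infinite_finite_induct) (auto simp: smul_add)

lemma lin_ext_superset:
  assumes "finite F" "keys x \<subseteq> F"
  shows "lin_ext L x = (\<Sum>m\<in>F. smul (lookup x m) (L m))"
  unfolding lin_ext_def
  by (rule sum.mono_neutral_left) (use assms in \<open>auto simp: in_keys_iff\<close>)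

lemma lin_ext_zero [simp]: "lin_ext L 0 = (0 :: 'a::ring_1 coh)"
  by (simp add: lin_ext_def)

lemma lin_ext_single [simp]: "lin_ext L (single m c) = smul c (L m :: 'a::ring_1 coh)"
  by (simp add: lin_ext_superset[of "{m}"])

lemma lin_ext_add: "lin_ext L (x + y) = lin_ext L x + lin_ext L (y :: 'a::ring_1 coh)"
proof -
  have "keys (x + y) \<subseteq> keys x \<union> keys y"
    by (rule keys_add)
  then show ?thesis
    by (simp add: lin_ext_superset[of "keys x \<union> keys y"] lookup_add smul_add_left sum.distrib)
qed

lemma lin_ext_smul: "lin_ext L (smul c x) = smul c (lin_ext L (x :: 'a::ring_1 coh))"
proof -
  have "keys (smul c x) \<subseteq> keys x"
    by (auto simp: in_keys_iff)
  then show ?thesis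
    by (simp add: lin_ext_superset[of "keys x"] smul_sum)
qed

lemma lin_ext_sum: "lin_ext L (sum f A) = (\<Sum>a\<in>A. lin_ext L (f a :: 'a::ring_1 coh))"
  by (induction A rule: infinite_finite_induct) (auto simp: lin_ext_add)

lemma lin_ext_cong: "(\<And>m. m \<in> keys x \<Longrightarrow> L m = L' m) \<Longrightarrow> lin_ext L x = lin_ext L' x"
  by (simp add: lin_ext_def)

lemma lin_ext_comp:
  "lin_ext L1 (lin_ext L2 x) = lin_ext (\<lambda>m. lin_ext L1 (L2 m)) (x :: 'a::ring_1 coh)"
proof -
  have "lin_ext L1 (lin_ext L2 x) = (\<Sum>m\<in>keys x. lin_ext L1 (smul (lookup x m) (L2 m)))"
    by (simp only: lin_ext_def[of L2 x] lin_ext_sum)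
  also have "\<dots> = (\<Sum>m\<in>keys x. smul (lookup x m) (lin_ext L1 (L2 m)))"
    by (simp only: lin_ext_smul)
  finally show ?thesis
    by (simp only: lin_ext_def[of _ x])
qed

lemma lin_ext_fun_add:
  "lin_ext (\<lambda>m. L m + L' m) x = lin_ext L x + lin_ext L' (x :: 'a::ring_1 coh)"
  by (simp add: lin_ext_def smul_add sum.distrib)

lemma lin_ext_fun_diff:
  "lin_ext (\<lambda>m. L m - L' m) x = lin_ext L x - lin_ext L' (x :: 'a::ring_1 coh)"
  by (simp add: lin_ext_def smul_diff sum_subtractf)

lemma lin_ext_fun_uminus: "lin_ext (\<lambda>m. - L m) x = - lin_ext L (x :: 'a::ring_1 coh)"
  by (simp add: lin_ext_def smul_uminus sum_negf)

lemma lin_ext_fun_smul: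
  "lin_ext (\<lambda>m. smul c (L m)) x = smul c (lin_ext L (x :: 'a::comm_ring_1 coh))"
  by (simp add: lin_ext_def smul_sum mult.commute)

lemma lin_ext_fun_zero: "lin_ext (\<lambda>m. 0) x = (0 :: 'a::ring_1 coh)"
  by (simp add: lin_ext_def)

lemma lin_ext_swap:
  "lin_ext (\<lambda>m. lin_ext (\<lambda>m'. f m m') y) x = lin_ext (\<lambda>m'. lin_ext (\<lambda>m. f m m') x) (y :: 'a::comm_ring_1 coh)"
  unfolding lin_ext_def smul_sum smul_smul
  by (subst sum.swap) (simp add: mult.commute)

lemma keys_lin_ext: "keys (lin_ext L x) \<subseteq> (\<Union>m\<in>keys x. keys (L m :: 'a::ring_1 coh))"
proof -
  have "keys (lin_ext L x) \<subseteq> (\<Union>m\<in>keys x. keys (smul (lookup x m) (L m)))"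
    unfolding lin_ext_def by (rule keys_sum)
  also have "\<dots> \<subseteq> (\<Union>m\<in>keys x. keys (L m))"
    by (intro UN_mono subsetI) (auto simp: in_keys_iff)
  finally show ?thesis .
qed

lemma cmult_eq_lin_ext:
  "cmult x y = lin_ext (\<lambda>m. lin_ext (\<lambda>m'. mono_mult m m') y) (x :: 'a::ring_1 coh)"
  by (simp add: cmult_def lin_ext_def smul_sum)

lemma cmult_zero_right [simp]: "cmult x 0 = (0 :: 'a::ring_1 coh)"
  by (simp add: cmult_def)

lemma cmult_smul_left: "cmult (smul c x) y = smul c (cmult x (y :: 'a::comm_ring_1 coh))"
  by (simp add: cmult_eq_lin_ext lin_ext_smul)

lemma cmult_smul_right: "cmult x (smul c y) = smul c (cmult x (y :: 'a::comm_ring_1 coh))"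
  by (simp add: cmult_eq_lin_ext lin_ext_smul lin_ext_fun_smul)

lemma mono_mult_pair:
  "mono_mult (a, S) (b, T) =
     (if S \<inter> T = {} then single (a + b, S \<union> T) (of_int (sgn S T)) else 0)"
  by (simp add: mono_mult_def)

section \<open>Binomial coefficients in prime characteristic\<close>

lemma coeff_one_plus_X_power:
  "coeff ([:1, 1:] ^ n) b = (of_nat (n choose b) :: 'a::comm_semiring_1)"
proof (cases "b \<le> n")
  case True
  then show ?thesis
    using coeff_linear_poly_power[of b n 1 1] by simp
next
  case False
  have "degree ([:1::'a, 1:] ^ n) \<le> n"
    using degree_power_le[of "[:1::'a, 1:]" n] by simp
  then show ?thesis
    using False by (simp add: coeff_eq_0 binomial_eq_0)
qed

lemma of_nat_choose_add_char_power:
  assumes "prime CHAR('a::comm_ring_1)" "k = CHAR('a) ^ i"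
  shows "(of_nat ((c + k) choose b) :: 'a) =
           of_nat (c choose b) + (if k \<le> b then of_nat (c choose (b - k)) else 0)"
proof -
  have "prime CHAR('a poly)"
    using assms(1) by simp
  moreover have "([:1, 1:] :: 'a poly) = 1 + monom 1 1"
    by (simp add: monom_altdef one_pCons)
  ultimately have "([:1, 1:] :: 'a poly) ^ k = 1 ^ k + (monom 1 1) ^ k"
    using freshmans_dream'[of k i "1 :: 'a poly" "monom 1 1"] assms(2) by simp
  then have "([:1, 1:] :: 'a poly) ^ (c + k) = [:1, 1:] ^ c + monom 1 k * [:1, 1:] ^ c"
    by (simp add: power_add monom_power algebra_simps)
  then have "coeff (([:1, 1:] :: 'a poly) ^ (c + k)) b =
               coeff ([:1, 1:] ^ c) b + coeff (monom 1 k * [:1, 1:] ^ c) b"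
    by simp
  then show ?thesis
    by (simp add: coeff_one_plus_X_power coeff_monom_mult not_less)
qed

section \<open>Reduced powers\<close>

definition sub_exps :: "(nat \<Rightarrow>\<^sub>0 nat) \<Rightarrow> nat \<Rightarrow> (nat \<Rightarrow>\<^sub>0 nat) set" where
  "sub_exps a k = {b. (\<forall>j. lookup b j \<le> lookup a j) \<and> (\<Sum>j\<in>keys b. lookup b j) = k}"

definition choose_exps :: "(nat \<Rightarrow>\<^sub>0 nat) \<Rightarrow> (nat \<Rightarrow>\<^sub>0 nat) \<Rightarrow> nat" where
  "choose_exps a b = (\<Prod>j\<in>keys a. lookup a j choose lookup b j)"

definition scale_exps :: "nat \<Rightarrow> (nat \<Rightarrow>\<^sub>0 nat) \<Rightarrow> (nat \<Rightarrow>\<^sub>0 nat)" where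
  "scale_exps c b = Poly_Mapping.map (\<lambda>e. c * e) b"

lemma pow_mono_eq:
  "pow_mono p k m =
     (\<Sum>b\<in>sub_exps (fst m) k. single (fst m + scale_exps (p - 1) b, snd m) (of_nat (choose_exps (fst m) b)))"
  by (simp add: pow_mono_def sub_exps_def scale_exps_def choose_exps_def)

lemma scale_exps_single: "scale_exps c (single j k) = single j (c * k)"
  by (simp add: scale_exps_def)

lemma finite_sub_exps: "finite (sub_exps a k)"
proof -
  let ?A = "{b :: nat \<Rightarrow>\<^sub>0 nat. \<forall>j. lookup b j \<le> lookup a j}"
  let ?f = "\<lambda>b. restrict (lookup b) (keys a)"
  have "inj_on ?f ?A"
  proof (rule inj_onI)
    fix x y assume "x \<in> ?A" "y \<in> ?A" and eq: "?f x = ?f y"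
    show "x = y"
    proof (rule poly_mapping_eqI)
      fix j
      show "lookup x j = lookup y j"
        using fun_cong[OF eq, of j] \<open>x \<in> ?A\<close> \<open>y \<in> ?A\<close>
        by (cases "j \<in> keys a") (auto simp: in_keys_iff, metis le_zero_eq)
    qed
  qed
  moreover have "?f ` ?A \<subseteq> (\<Pi>\<^sub>E j \<in> keys a. {..lookup a j})"
    by auto
  then have "finite (?f ` ?A)"
    by (rule finite_subset) (intro finite_PiE; simp)
  ultimately have "finite ?A"
    using finite_imageD by blast
  then show ?thesis
    by (rule finite_subset[rotated]) (auto simp: sub_exps_def)
qed

lemma prod_choose_eq_choose_exps:
  assumes "finite F" "keys a \<subseteq> F" "keys b \<subseteq> F"
  shows "(\<Prod>l\<in>F. lookup a l choose lookup b l) =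
           (if \<forall>l. lookup b l \<le> lookup a l then choose_exps a b else 0)"
proof (cases "\<forall>l. lookup b l \<le> lookup a l")
  case True
  have "choose_exps a b = (\<Prod>l\<in>F. lookup a l choose lookup b l)"
    unfolding choose_exps_def
  proof (rule prod.mono_neutral_left[OF assms(1,2)], rule ballI)
    fix i assume "i \<in> F - keys a"
    then have "lookup a i = 0"
      by (simp add: in_keys_iff)
    then show "lookup a i choose lookup b i = 1"
      using True[rule_format, of i] by simp
  qed
  then show ?thesis
    using True by simp
next
  case False
  then obtain l where l: "lookup a l < lookup b l"
    by (auto simp: not_le)
  then have "l \<in> F"
    using assms(3) by (auto simp: in_keys_iff)
  then show ?thesis
    using False l assms(1) by (auto intro: prod_zero simp: binomial_eq_0)
qed

lemma single_if_total_le_lookup: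
  fixes b :: "nat \<Rightarrow>\<^sub>0 nat"
  assumes total: "(\<Sum>l\<in>keys b. lookup b l) = k" and "k \<le> lookup b j"
  shows "b = single j k"
proof (cases "j \<in> keys b")
  case True
  have "(\<Sum>l\<in>keys b - {j}. lookup b l) + lookup b j = k"
    using total sum.remove[OF finite_keys True, of "lookup b"] by simp
  then have bj: "lookup b j = k" and rest: "(\<Sum>l\<in>keys b - {j}. lookup b l) = 0"
    using assms(2) by arith+
  have "lookup b l = 0" if "l \<noteq> j" for l
  proof (rule ccontr)
    assume "lookup b l \<noteq> 0"
    then have "l \<in> keys b - {j}"
      using that by (simp add: in_keys_iff)
    then show False
      using rest \<open>lookup b l \<noteq> 0\<close> by simp
  qed
  then show ?thesis
    using bj by (intro poly_mapping_eqI) (auto simp: lookup_single when_def)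
next
  case False
  then show ?thesis
    using assms by (auto simp: in_keys_iff intro: poly_mapping_eqI)
qed

lemma lookup_add_single: "lookup (a + single j k) l = lookup a l + (if l = j then k else 0)"
  by (simp add: lookup_add lookup_single when_def)

lemma keys_add_single:
  fixes a :: "nat \<Rightarrow>\<^sub>0 nat"
  assumes "k > 0"
  shows "keys (a + single j k) = insert j (keys a)"
  using assms by (auto simp: in_keys_iff lookup_add_single split: if_splits)

lemma choose_exps_add_single:
  assumes "k > 0"
  shows "choose_exps (a + single j k) b =
           ((lookup a j + k) choose lookup b j) * (\<Prod>l\<in>keys a - {j}. lookup a l choose lookup b l)"
proof -
  have "choose_exps (a + single j k) b =
          (lookup (a + single j k) j choose lookup b j)
          * (\<Prod>l\<in>keys a - {j}. lookup (a + single j k) l choose lookup b l)"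
    unfolding choose_exps_def keys_add_single[OF assms] by (simp add: prod.insert_remove)
  also have "(\<Prod>l\<in>keys a - {j}. lookup (a + single j k) l choose lookup b l) =
               (\<Prod>l\<in>keys a - {j}. lookup a l choose lookup b l)"
    by (rule prod.cong) (auto simp: lookup_add_single)
  finally show ?thesis
    by (simp add: lookup_add_single)
qed

lemma choose_exps_shift_char_power:
  assumes ch: "prime CHAR('a::comm_ring_1)" and k: "k = CHAR('a) ^ i"
    and b: "b \<in> sub_exps (a + single j k) k"
  shows "(of_nat (choose_exps (a + single j k) b) :: 'a) =
           (if \<forall>l. lookup b l \<le> lookup a l then of_nat (choose_exps a b) else 0)
           + (if b = single j k then 1 else 0)"
proof -
  define R where "R = (\<Prod>l\<in>keys a - {j}. lookup a l choose lookup b l)"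
  have "k > 0"
    using ch k prime_gt_0_nat by simp
  have total: "(\<Sum>l\<in>keys b. lookup b l) = k" and le: "\<And>l. lookup b l \<le> lookup (a + single j k) l"
    using b by (auto simp: sub_exps_def)
  have "keys b \<subseteq> insert j (keys a)"
  proof
    fix l assume "l \<in> keys b"
    then show "l \<in> insert j (keys a)"
      using le[of l] by (cases "l = j") (auto simp: in_keys_iff lookup_add_single)
  qed
  then have "(\<Prod>l\<in>insert j (keys a). lookup a l choose lookup b l) =
               (if \<forall>l. lookup b l \<le> lookup a l then choose_exps a b else 0)"
    by (intro prod_choose_eq_choose_exps) (simp_all add: subset_insertI)
  moreover have "(\<Prod>l\<in>insert j (keys a). lookup a l choose lookup b l) = (lookup a j choose lookup b j) * R"
    unfolding R_def by (simp add: prod.insert_remove)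
  ultimately have P: "(lookup a j choose lookup b j) * R =
                       (if \<forall>l. lookup b l \<le> lookup a l then choose_exps a b else 0)"
    by simp
  have "(of_nat (choose_exps (a + single j k) b) :: 'a) = of_nat ((lookup a j + k) choose lookup b j) * of_nat R"
    by (simp add: choose_exps_add_single[OF \<open>k > 0\<close>] R_def)
  also have "\<dots> = of_nat ((lookup a j choose lookup b j) * R)
                   + (if k \<le> lookup b j then of_nat (lookup a j choose (lookup b j - k)) * of_nat R else 0)"
    by (simp add: of_nat_choose_add_char_power[OF ch k] distrib_right)
  also have "of_nat ((lookup a j choose lookup b j) * R) =
               (if \<forall>l. lookup b l \<le> lookup a l then of_nat (choose_exps a b) else (0 :: 'a))"
    by (simp add: P)
  also have "(if k \<le> lookup b j then of_nat (lookup a j choose (lookup b j - k)) * of_nat R else (0::'a))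
               = (if b = single j k then 1 else 0)"
  proof (cases "k \<le> lookup b j")
    case True
    then have bj: "b = single j k"
      using single_if_total_le_lookup[OF total] by simp
    have "R = 1"
      unfolding R_def bj by (rule prod.neutral) (auto simp: lookup_single when_def)
    then show ?thesis
      using True bj by simp
  next
    case False
    then show ?thesis
      by auto
  qed
  finally show ?thesis
    by simp
qed

lemma pow_mono_shift_char_power:
  assumes ch: "prime CHAR('a::comm_ring_1)" and k: "k = CHAR('a) ^ i"
  shows "(pow_mono CHAR('a) k (a + single j k, T) :: 'a coh) =
           (\<Sum>b\<in>sub_exps a k. single (a + single j k + scale_exps (CHAR('a) - 1) b, T) (of_nat (choose_exps a b)))
           + single (a + single j (CHAR('a) * k), T) 1"
proof -
  let ?p = "CHAR('a)" and ?a' = "a + single j k"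
  let ?t = "\<lambda>b c. single (?a' + scale_exps (?p - 1) b, T) c :: 'a coh"
  have "?p > 0" "k > 0"
    using ch k prime_gt_0_nat by simp_all
  have sub: "sub_exps a k \<subseteq> sub_exps ?a' k"
    by (auto simp: sub_exps_def lookup_add_single) (meson le_add1 order_trans)
  have jk: "single j k \<in> sub_exps ?a' k"
    using \<open>k > 0\<close> by (auto simp: sub_exps_def lookup_add_single lookup_single when_def)
  have "(pow_mono ?p k (?a', T) :: 'a coh) = (\<Sum>b\<in>sub_exps ?a' k. ?t b (of_nat (choose_exps ?a' b)))"
    by (simp add: pow_mono_eq)
  also have "\<dots> = (\<Sum>b\<in>sub_exps ?a' k. (if b \<in> sub_exps a k then ?t b (of_nat (choose_exps a b)) else 0)
                   + (if b = single j k then ?t b 1 else 0))"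
  proof (rule sum.cong[OF refl])
    fix b assume b: "b \<in> sub_exps ?a' k"
    then have "(\<forall>l. lookup b l \<le> lookup a l) \<longleftrightarrow> b \<in> sub_exps a k"
      by (auto simp: sub_exps_def)
    then show "?t b (of_nat (choose_exps ?a' b)) =
                 (if b \<in> sub_exps a k then ?t b (of_nat (choose_exps a b)) else 0)
                 + (if b = single j k then ?t b 1 else 0)"
      unfolding choose_exps_shift_char_power[OF ch k b] single_add by simp
  qed
  also have "\<dots> = (\<Sum>b\<in>sub_exps a k. ?t b (of_nat (choose_exps a b))) + ?t (single j k) 1"
    using sub jk
    by (simp add: sum.distrib sum.delta' finite_sub_exps sum.inter_restrict[symmetric]
                  Int_absorb1 del: sum.inter_restrict)
  also have "?a' + scale_exps (?p - 1) (single j k) = a + single j (?p * k)"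
    using \<open>?p > 0\<close> by (simp add: scale_exps_single add.assoc single_add[symmetric] algebra_simps)
  finally show ?thesis .
qed

section \<open>Milnor operations as derivations\<close>

definition koszul_sign :: "nat set \<Rightarrow> nat \<Rightarrow> int" where
  "koszul_sign S j = (-1) ^ card {s\<in>S. s < j}"

definition milnor_mono :: "nat \<Rightarrow> nat \<Rightarrow> mono \<Rightarrow> 'a::ring_1 coh" where
  "milnor_mono p i m =
     (\<Sum>j\<in>snd m. single (fst m + single j (p ^ i), snd m - {j}) (of_int (koszul_sign (snd m) j)))"

lemma milnor_mono_pair:
  "milnor_mono p i (a, S) = (\<Sum>j\<in>S. single (a + single j (p ^ i), S - {j}) (of_int (koszul_sign S j)))"
  by (simp add: milnor_mono_def)

text \<open>Each summand of \<open>P\<^sup>k (Q\<^sub>i m)\<close> with \<open>k = p\<^sup>i\<close> reappears in \<open>Q\<^sub>i (P\<^sup>k m)\<close>, except the one raising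
  \<open>t\<^sub>j\<^sup>k\<close> to \<open>t\<^sub>j\<^sup>p\<^sup>k\<close>.\<close>
lemma milnor_mono_Suc:
  assumes ch: "prime CHAR('a::comm_ring_1)"
  shows "lin_ext (pow_mono CHAR('a) (CHAR('a) ^ i)) (milnor_mono CHAR('a) i m)
           - lin_ext (milnor_mono CHAR('a) i) (pow_mono CHAR('a) (CHAR('a) ^ i) m)
         = (milnor_mono CHAR('a) (Suc i) m :: 'a coh)"
proof -
  obtain a S where m: "m = (a, S)"
    by (cases m)
  let ?p = "CHAR('a)"
  define k where "k = ?p ^ i"
  let ?rest = "\<lambda>j. \<Sum>b\<in>sub_exps a k.
                 single (a + single j k + scale_exps (?p - 1) b, S - {j}) (of_nat (choose_exps a b)) :: 'a coh"
  have P_Q: "lin_ext (pow_mono ?p k) (milnor_mono ?p i m) =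
               (\<Sum>j\<in>S. smul (of_int (koszul_sign S j)) (pow_mono ?p k (a + single j k, S - {j})) :: 'a coh)"
    by (simp add: m milnor_mono_pair k_def lin_ext_sum)
  have "lin_ext (milnor_mono ?p i) (pow_mono ?p k m) =
          (\<Sum>b\<in>sub_exps a k. \<Sum>j\<in>S. single (a + scale_exps (?p - 1) b + single j k, S - {j})
                                      (of_nat (choose_exps a b) * of_int (koszul_sign S j)) :: 'a coh)"
    by (simp add: m pow_mono_eq lin_ext_sum milnor_mono_pair k_def smul_sum)
  also have "\<dots> = (\<Sum>j\<in>S. smul (of_int (koszul_sign S j)) (?rest j))"
    by (subst sum.swap) (simp add: smul_sum ac_simps)
  finally have Q_P: "lin_ext (milnor_mono ?p i) (pow_mono ?p k m) =
                       (\<Sum>j\<in>S. smul (of_int (koszul_sign S j)) (?rest j))" .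
  have "pow_mono ?p k (a + single j k, S - {j}) - ?rest j = (single (a + single j (?p ^ Suc i), S - {j}) 1 :: 'a coh)"
    for j
    unfolding pow_mono_shift_char_power[OF ch k_def] by (simp add: k_def)
  then show ?thesis
    unfolding k_def[symmetric] P_Q Q_P
    by (simp add: m milnor_mono_pair smul_diff[symmetric] sum_subtractf[symmetric] mult.commute)
qed

lemma milnorQ_eq_lin_ext:
  assumes ch: "prime CHAR('a::comm_ring_1)"
  shows "milnorQ CHAR('a) i = (lin_ext (milnor_mono CHAR('a) i) :: 'a coh \<Rightarrow> 'a coh)"
proof (induction i)
  case 0
  have "bock_mono = (milnor_mono CHAR('a) 0 :: mono \<Rightarrow> 'a coh)"
    by (rule ext) (simp add: bock_mono_def milnor_mono_def koszul_sign_def)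
  then show ?case
    by (simp add: bockstein_def)
next
  case (Suc i)
  show ?case
    by (rule ext)
       (simp only: milnorQ.simps Suc.IH redpow_def lin_ext_comp lin_ext_fun_diff[symmetric]
                   milnor_mono_Suc[OF ch])
qed

section \<open>Signs of shuffles\<close>

lemma neg_one_power_eq_if_even: "even (a + b) \<Longrightarrow> (-1::int) ^ a = (-1) ^ b"
  by (simp add: minus_one_power_iff)

lemma card_less_union:
  assumes "finite S" "finite T" "S \<inter> T = {}"
  shows "card {x\<in>S \<union> T. x < j} = card {s\<in>S. s < j} + card {t\<in>T. t < j}"
proof -
  have "{x\<in>S \<union> T. x < j} = {s\<in>S. s < j} \<union> {t\<in>T. t < j}"
    by auto
  also have "card \<dots> = card {s\<in>S. s < j} + card {t\<in>T. t < j}"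
    by (rule card_Un_disjoint) (use assms in auto)
  finally show ?thesis .
qed

lemma card_less_add_card_greater:
  assumes "finite S" "j \<notin> S"
  shows "card {s\<in>S. s < j} + card {s\<in>S. j < s} = card (S :: nat set)"
proof -
  have "S = {s\<in>S. s < j} \<union> {s\<in>S. j < s}"
    using assms(2) by auto (metis linorder_neqE_nat)
  also have "card \<dots> = card {s\<in>S. s < j} + card {s\<in>S. j < s}"
    by (rule card_Un_disjoint) (use assms(1) in auto)
  finally show ?thesis
    by simp
qed

lemma card_less_remove_less:
  assumes "finite S" "l \<in> S" "l < j"
  shows "card {s\<in>S - {l}. s < j} + 1 = card {s\<in>S. s < (j::nat)}"
proof -
  have "{s\<in>S. s < j} = insert l {s\<in>S - {l}. s < j}"
    using assms by auto
  then show ?thesis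
    using assms(1) by simp
qed

lemma card_less_remove_ge: "j \<le> l \<Longrightarrow> card {s\<in>S - {l}. s < j} = card {s\<in>S. s < (j::nat)}"
  by (rule arg_cong[where f = card]) auto

lemma inv_count_remove_left:
  assumes "finite S" "finite T" "j \<in> S"
  shows "inv_count S T = inv_count (S - {j}) T + card {t\<in>T. t < j}"
proof -
  have eq: "{(s, t). s \<in> S \<and> t \<in> T \<and> t < s} =
              {(s, t). s \<in> S - {j} \<and> t \<in> T \<and> t < s} \<union> Pair j ` {t\<in>T. t < j}"
    using assms(3) by auto
  have "finite {(s, t). s \<in> S - {j} \<and> t \<in> T \<and> t < s}"
    by (rule finite_subset[of _ "S \<times> T"]) (use assms in auto)
  then show ?thesis
    unfolding inv_count_def eq using assms
    by (subst card_Un_disjoint) (auto simp: card_image inj_on_def)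
qed

lemma inv_count_remove_right:
  assumes "finite S" "finite T" "j \<in> T"
  shows "inv_count S T = inv_count S (T - {j}) + card {s\<in>S. j < s}"
proof -
  have eq: "{(s, t). s \<in> S \<and> t \<in> T \<and> t < s} =
              {(s, t). s \<in> S \<and> t \<in> T - {j} \<and> t < s} \<union> (\<lambda>s. (s, j)) ` {s\<in>S. j < s}"
    using assms(3) by auto
  have "finite {(s, t). s \<in> S \<and> t \<in> T - {j} \<and> t < s}"
    by (rule finite_subset[of _ "S \<times> T"]) (use assms in auto)
  then show ?thesis
    unfolding inv_count_def eq using assms
    by (subst card_Un_disjoint) (auto simp: card_image inj_on_def)
qed

lemma inv_count_add_inv_count_swap:
  assumes "finite S" "finite T" "S \<inter> T = {}"
  shows "inv_count S T + inv_count T S = card S * card T"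
proof -
  let ?lt = "{(s, t). s \<in> S \<and> t \<in> T \<and> s < t}"
  have fin: "finite (S \<times> T)"
    using assms by simp
  have "S \<times> T = {(s, t). s \<in> S \<and> t \<in> T \<and> t < s} \<union> ?lt"
    using assms(3) by (auto simp: neq_iff)
  also have "card \<dots> = inv_count S T + card ?lt"
    unfolding inv_count_def
    by (rule card_Un_disjoint) (auto intro: finite_subset[OF _ fin])
  finally have "card S * card T = inv_count S T + card ?lt"
    by (simp add: card_cartesian_product)
  moreover have "?lt = prod.swap ` {(s, t). s \<in> T \<and> t \<in> S \<and> t < s}"
    by force
  then have "card ?lt = inv_count T S"
    unfolding inv_count_def by (simp add: card_image)
  ultimately show ?thesis
    by simp
qed

lemma sgn_swap:
  assumes "finite S" "finite T" "S \<inter> T = {}"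
  shows "sgn S T = (-1) ^ (card S * card T) * sgn T S"
  using inv_count_add_inv_count_swap[OF assms]
  unfolding sgn_def power_add[symmetric] by (intro neg_one_power_eq_if_even) presburger

lemma sgn_koszul_sign_left:
  assumes "finite S" "finite T" "S \<inter> T = {}" "j \<in> S"
  shows "sgn S T * koszul_sign (S \<union> T) j = koszul_sign S j * sgn (S - {j}) T"
  unfolding sgn_def koszul_sign_def power_add[symmetric]
    inv_count_remove_left[OF assms(1,2,4)] card_less_union[OF assms(1-3)]
  by (rule neg_one_power_eq_if_even) presburger

lemma sgn_koszul_sign_right:
  assumes "finite S" "finite T" "S \<inter> T = {}" "j \<in> T"
  shows "sgn S T * koszul_sign (S \<union> T) j = (-1) ^ card S * koszul_sign T j * sgn S (T - {j})"
proof -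
  have "card {s\<in>S. s < j} + card {s\<in>S. j < s} = card S"
    using assms by (intro card_less_add_card_greater) auto
  then show ?thesis
    unfolding sgn_def koszul_sign_def power_add[symmetric]
      inv_count_remove_right[OF assms(1,2,4)] card_less_union[OF assms(1-3)]
    by (intro neg_one_power_eq_if_even) presburger
qed

lemma sgn_koszul_sign_overlap:
  assumes "finite S" "finite T" "S \<inter> T = {j}"
  shows "koszul_sign S j * sgn (S - {j}) T = - ((-1) ^ card S * koszul_sign T j * sgn S (T - {j}))"
proof -
  have "j \<in> S" "j \<in> T"
    using assms(3) by auto
  let ?A = "S - {j}" and ?B = "T - {j}"
  have c1: "card {s\<in>S. s < j} = card {s\<in>?A. s < j}" and c2: "card {t\<in>T. t < j} = card {t\<in>?B. t < j}"
    using card_less_remove_ge[of j j] by simp_all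
  have i1: "inv_count ?A T = inv_count ?A ?B + card {s\<in>?A. j < s}"
    using assms \<open>j \<in> T\<close> by (intro inv_count_remove_right) auto
  have i2: "inv_count S ?B = inv_count ?A ?B + card {t\<in>?B. t < j}"
    using assms \<open>j \<in> S\<close> by (intro inv_count_remove_left) auto
  have c3: "card {s\<in>?A. s < j} + card {s\<in>?A. j < s} = card ?A"
    using assms by (intro card_less_add_card_greater) auto
  have c4: "card S = card ?A + 1"
    using card.remove[OF assms(1) \<open>j \<in> S\<close>] by simp
  have "koszul_sign S j * sgn ?A T = (-1) ^ (card {s\<in>?A. s < j} + (inv_count ?A ?B + card {s\<in>?A. j < s}))"
    unfolding koszul_sign_def sgn_def c1 i1 power_add by simp
  also have "\<dots> = (-1) ^ (1 + card S + card {t\<in>?B. t < j} + (inv_count ?A ?B + card {t\<in>?B. t < j}))"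
    by (rule neg_one_power_eq_if_even) (use c3 c4 in presburger)
  also have "\<dots> = - ((-1) ^ card S * koszul_sign T j * sgn S ?B)"
    unfolding koszul_sign_def sgn_def c2 i2 power_add by simp
  finally show ?thesis .
qed

lemma koszul_sign_swap_less:
  assumes "finite S" "l \<in> S" "l < l'"
  shows "koszul_sign S l * koszul_sign (S - {l}) l' = - (koszul_sign S l' * koszul_sign (S - {l'}) l)"
proof -
  have a: "card {s\<in>S - {l}. s < l'} + 1 = card {s\<in>S. s < l'}"
    using assms by (intro card_less_remove_less)
  have b: "card {s\<in>S - {l'}. s < l} = card {s\<in>S. s < l}"
    using assms by (intro card_less_remove_ge) simp
  have "koszul_sign S l * koszul_sign (S - {l}) l' = (-1) ^ (card {s\<in>S. s < l} + card {s\<in>S - {l}. s < l'})"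
    by (simp add: koszul_sign_def power_add)
  also have "\<dots> = (-1) ^ (1 + card {s\<in>S. s < l'} + card {s\<in>S - {l'}. s < l})"
    by (rule neg_one_power_eq_if_even) (use a b in presburger)
  also have "\<dots> = - (koszul_sign S l' * koszul_sign (S - {l'}) l)"
    by (simp add: koszul_sign_def power_add)
  finally show ?thesis .
qed

lemma koszul_sign_swap:
  assumes "finite S" "l \<in> S" "l' \<in> S" "l \<noteq> l'"
  shows "koszul_sign S l * koszul_sign (S - {l}) l' = - (koszul_sign S l' * koszul_sign (S - {l'}) l)"
  using assms koszul_sign_swap_less[of S l l'] koszul_sign_swap_less[of S l' l]
  by (cases "l < l'") (simp_all add: neq_iff equation_minus_iff)

definition product_sign :: "nat \<Rightarrow> nat set \<Rightarrow> nat set \<Rightarrow> int" where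
  "product_sign n I J = (-1) ^ (n * card (I - I \<inter> J) + (card (I - I \<inter> J))\<^sup>2)
                          * sgn (I \<inter> J) (I - I \<inter> J) * sgn (I - I \<inter> J) J"

lemma product_sign_subset:
  assumes "I \<subseteq> J"
  shows "product_sign n I J = 1"
proof -
  have empty: "I - I \<inter> J = {}"
    using assms by auto
  show ?thesis
    unfolding product_sign_def sgn_def inv_count_def empty by simp
qed

lemma sgn_sgn_move:
  assumes "finite K" "finite A" "finite J" "i \<in> A" "i \<notin> J"
  shows "sgn K A * sgn A J =
           (-1) ^ (card {k\<in>K. i < k} + card {t\<in>J. t < i} + card {a\<in>A - {i}. i < a})
           * sgn K (A - {i}) * sgn (A - {i}) (insert i J)"
proof -
  have "inv_count A (insert i J) = inv_count A (insert i J - {i}) + card {a\<in>A. i < a}"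
    using assms by (intro inv_count_remove_right) auto
  moreover have "insert i J - {i} = J"
    using assms(5) by auto
  ultimately have "inv_count (A - {i}) (insert i J) = inv_count (A - {i}) J + card {a\<in>A - {i}. i < a}"
    using assms by (metis finite_Diff finite_insert inv_count_remove_right insertI1)
  then show ?thesis
    unfolding sgn_def inv_count_remove_right[OF assms(1,2,4)] inv_count_remove_left[OF assms(2,3,4)]
    by (simp add: power_add)
qed

lemma product_sign_eq_sgn_move:
  assumes "finite I" "finite J" "i \<in> I" "i \<notin> J"
  shows "product_sign n I J =
           (-1) ^ (n * card (I - J) + (card (I - J))\<^sup>2 + card {k\<in>I \<inter> J. i < k} + card {t\<in>J. t < i}
                   + card {a\<in>I - J - {i}. i < a})
           * sgn (I \<inter> J) (I - J - {i}) * sgn (I - J - {i}) (insert i J)"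
proof -
  have "I - I \<inter> J = I - J" "i \<in> I - J"
    using assms by auto
  then show ?thesis
    unfolding product_sign_def mult.assoc
    using sgn_sgn_move[of "I \<inter> J" "I - J" J i] assms by (simp add: power_add)
qed

text \<open>The sign picked up when \<open>i \<in> I - J\<close> is moved from the left factor to the right one.\<close>
lemma product_sign_move:
  assumes fin: "finite I" "finite J" and "I \<subseteq> {..<n}" "i \<in> I" "i \<notin> J"
  shows "product_sign n I J =
           (-1) ^ card {l\<in>I. l < i} * (- ((-1) ^ (n - card (I - {i})))) * (-1) ^ card {l\<in>J. l < i}
           * product_sign n (I - {i}) (insert i J)"
proof -
  define K where "K = I \<inter> J"
  define A where "A = I - J - {i}"
  have fin': "finite K" "finite A"
    using fin by (auto simp: K_def A_def)
  have sets: "(I - {i}) \<inter> insert i J = K" "(I - {i}) - K = A"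
             "I - {i} = K \<union> A" "K \<inter> A = {}" "I - J = insert i A" "i \<notin> K" "i \<notin> A"
    using assms by (auto simp: A_def K_def)
  have "{l\<in>I. l < i} = {l\<in>K \<union> A. l < i}"
    using sets(3) by auto
  then have "card {l\<in>I. l < i} = card {l\<in>K. l < i} + card {l\<in>A. l < i}"
    using card_less_union[OF fin' sets(4), of i] by simp
  moreover have "card {l\<in>K. l < i} + card {l\<in>K. i < l} = card K"
    using fin'(1) sets(6) by (rule card_less_add_card_greater)
  moreover have "card {l\<in>A. l < i} + card {l\<in>A. i < l} = card A"
    using fin'(2) sets(7) by (rule card_less_add_card_greater)
  moreover have "card (I - {i}) \<le> n"
    using assms(3) card_mono[of "{..<n}" "I - {i}"] by auto
  then have "(n - card (I - {i})) + card K + card A = n"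
    using fin' sets(3,4) by (simp add: card_Un_disjoint)
  moreover have "n * card (I - J) + (card (I - J))\<^sup>2 = n * card A + n + ((card A)\<^sup>2 + 2 * card A + 1)"
    using fin'(2) sets(5,7) by (simp add: power2_eq_square algebra_simps)
  moreover have "even (X + n + (Y + 2 * a + 1) + kg + j + ag + (kl + al + 1 + N + j + (X + Y)))"
    if "N + k + a = n" "kl + kg = k" "al + ag = a" for X Y N k a kl kg al ag j :: nat
    using that by presburger
  ultimately have "(-1::int) ^ (n * card (I - J) + (card (I - J))\<^sup>2 + card {k\<in>K. i < k} + card {t\<in>J. t < i}
                                + card {a\<in>A. i < a})
                   = (-1) ^ (card {l\<in>I. l < i} + 1 + (n - card (I - {i})) + card {l\<in>J. l < i}
                             + (n * card A + (card A)\<^sup>2))"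
    by (intro neg_one_power_eq_if_even) (simp only: add.assoc)
  moreover have "product_sign n (I - {i}) (insert i J) = (-1) ^ (n * card A + (card A)\<^sup>2) * sgn K A * sgn A (insert i J)"
    unfolding product_sign_def sets(1,2) ..
  ultimately show ?thesis
    unfolding product_sign_eq_sgn_move[OF fin assms(4,5)] K_def[symmetric] A_def[symmetric]
    by (simp add: power_add)
qed

section \<open>The Leibniz rule and graded commutativity\<close>

lemma lin_ext_mono_mult_milnor_left:
  "lin_ext (\<lambda>k. mono_mult k (b, T)) (milnor_mono p i (a, S)) =
     (\<Sum>j\<in>S. smul (of_int (koszul_sign S j)) (mono_mult (a + single j (p ^ i), S - {j}) (b, T)) :: 'a::ring_1 coh)"
  by (simp add: milnor_mono_pair lin_ext_sum)

lemma lin_ext_mono_mult_milnor_right: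
  "lin_ext (\<lambda>k. mono_mult (a, S) k) (milnor_mono p i (b, T)) =
     (\<Sum>j\<in>T. smul (of_int (koszul_sign T j)) (mono_mult (a, S) (b + single j (p ^ i), T - {j})) :: 'a::ring_1 coh)"
  by (simp add: milnor_mono_pair lin_ext_sum)

lemma milnor_mono_mult_disjoint:
  assumes fin: "finite S" "finite T" and disj: "S \<inter> T = {}"
  shows "lin_ext (milnor_mono p i) (mono_mult (a, S) (b, T) :: 'a::comm_ring_1 coh) =
           lin_ext (\<lambda>k. mono_mult k (b, T)) (milnor_mono p i (a, S))
           + smul ((-1) ^ card S) (lin_ext (\<lambda>k. mono_mult (a, S) k) (milnor_mono p i (b, T)))"
proof -
  let ?E = "\<lambda>j. single j (p ^ i) :: nat \<Rightarrow>\<^sub>0 nat"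
  let ?t = "\<lambda>j. single (a + b + ?E j, S \<union> T - {j}) (of_int (sgn S T * koszul_sign (S \<union> T) j)) :: 'a coh"
  have "lin_ext (milnor_mono p i) (mono_mult (a, S) (b, T) :: 'a coh) = (\<Sum>j\<in>S \<union> T. ?t j)"
    using disj by (simp add: mono_mult_pair milnor_mono_pair smul_sum mult.commute)
  also have "\<dots> = (\<Sum>j\<in>S. ?t j) + (\<Sum>j\<in>T. ?t j)"
    by (rule sum.union_disjoint) (use fin disj in auto)
  also have "(\<Sum>j\<in>S. ?t j) =
               (\<Sum>j\<in>S. smul (of_int (koszul_sign S j)) (mono_mult (a + ?E j, S - {j}) (b, T)))"
  proof (rule sum.cong[OF refl])
    fix j assume "j \<in> S"
    then have "(S - {j}) \<inter> T = {}" "S \<union> T - {j} = (S - {j}) \<union> T"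
      using disj by auto
    then show "?t j = smul (of_int (koszul_sign S j)) (mono_mult (a + ?E j, S - {j}) (b, T))"
      unfolding mono_mult_pair using sgn_koszul_sign_left[OF fin disj \<open>j \<in> S\<close>]
      by (simp add: ac_simps)
  qed
  also have "(\<Sum>j\<in>T. ?t j) =
               (\<Sum>j\<in>T. smul (of_int ((-1) ^ card S * koszul_sign T j)) (mono_mult (a, S) (b + ?E j, T - {j})))"
  proof (rule sum.cong[OF refl])
    fix j assume "j \<in> T"
    then have "S \<inter> (T - {j}) = {}" "S \<union> T - {j} = S \<union> (T - {j})"
      using disj by auto
    then show "?t j = smul (of_int ((-1) ^ card S * koszul_sign T j)) (mono_mult (a, S) (b + ?E j, T - {j}))"
      unfolding mono_mult_pair using sgn_koszul_sign_right[OF fin disj \<open>j \<in> T\<close>]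
      by (simp add: ac_simps)
  qed
  finally show ?thesis
    by (simp add: lin_ext_mono_mult_milnor_left lin_ext_mono_mult_milnor_right smul_sum)
qed

text \<open>If \<open>S\<close> and \<open>T\<close> share two indices, every term vanishes; if they share exactly one, the two
  surviving terms cancel.\<close>
lemma milnor_mono_mult_overlap:
  assumes fin: "finite S" "finite T" and overlap: "S \<inter> T \<noteq> {}"
  shows "lin_ext (\<lambda>k. mono_mult k (b, T)) (milnor_mono p i (a, S))
           + smul ((-1) ^ card S) (lin_ext (\<lambda>k. mono_mult (a, S) k) (milnor_mono p i (b, T)))
         = (0 :: 'a::comm_ring_1 coh)"
proof -
  let ?E = "\<lambda>j. single j (p ^ i) :: nat \<Rightarrow>\<^sub>0 nat"
  let ?l = "\<lambda>j. smul (of_int (koszul_sign S j)) (mono_mult (a + ?E j, S - {j}) (b, T)) :: 'a coh"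
  let ?r = "\<lambda>j. smul (of_int ((-1) ^ card S * koszul_sign T j)) (mono_mult (a, S) (b + ?E j, T - {j})) :: 'a coh"
  have l0: "?l j = 0" and r0: "?r j = 0" if "S \<inter> T \<noteq> {j}" for j
    using that overlap by (auto simp: mono_mult_pair)
  have "(\<Sum>j\<in>S. ?l j) + (\<Sum>j\<in>T. ?r j) = 0"
  proof (cases "\<exists>j. S \<inter> T = {j}")
    case True
    then obtain j where j: "S \<inter> T = {j}"
      by blast
    then have "j \<in> S" "j \<in> T" "(S - {j}) \<inter> T = {}" "S \<inter> (T - {j}) = {}"
              "(S - {j}) \<union> T = S \<union> T" "S \<union> (T - {j}) = S \<union> T"
      by auto
    moreover have "(\<Sum>j\<in>S. ?l j) = ?l j"
      using fin(1) \<open>j \<in> S\<close> l0 j by (subst sum.remove) (auto intro!: sum.neutral)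
    moreover have "(\<Sum>j\<in>T. ?r j) = ?r j"
      using fin(2) \<open>j \<in> T\<close> r0 j by (subst sum.remove) (auto intro!: sum.neutral)
    moreover have "of_int (koszul_sign S j) * of_int (sgn (S - {j}) T) =
                     - (of_int (koszul_sign T j) * ((- 1) ^ card S * of_int (sgn S (T - {j}))) :: 'a)"
      using arg_cong[OF sgn_koszul_sign_overlap[OF fin j], of "of_int :: int \<Rightarrow> 'a"]
      by (simp add: ac_simps)
    ultimately show ?thesis
      by (simp add: mono_mult_pair single_add[symmetric] ac_simps)
  next
    case False
    then show ?thesis
      using l0 r0 by simp
  qed
  then show ?thesis
    by (simp add: lin_ext_mono_mult_milnor_left lin_ext_mono_mult_milnor_right smul_sum)
qed

lemma milnor_mono_mult:
  assumes "finite S" "finite T"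
  shows "lin_ext (milnor_mono p i) (mono_mult (a, S) (b, T) :: 'a::comm_ring_1 coh) =
           lin_ext (\<lambda>k. mono_mult k (b, T)) (milnor_mono p i (a, S))
           + smul ((-1) ^ card S) (lin_ext (\<lambda>k. mono_mult (a, S) k) (milnor_mono p i (b, T)))"
proof (cases "S \<inter> T = {}")
  case True
  then show ?thesis
    using assms by (rule milnor_mono_mult_disjoint[rotated 2])
next
  case False
  then show ?thesis
    using milnor_mono_mult_overlap[OF assms False] by (simp add: mono_mult_pair)
qed

lemma sum_swap_off_diagonal:
  assumes "finite S"
  shows "(\<Sum>l\<in>S. \<Sum>l'\<in>S - {l}. f l l') = (\<Sum>l'\<in>S. \<Sum>l\<in>S - {l'}. (f l l' :: 'b::comm_monoid_add))"
proof -
  have "{l'. l' \<in> S \<and> l \<noteq> l'} = S - {l}" "{l. l \<in> S \<and> l \<noteq> l'} = S - {l'}" for l l'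
    by auto
  then show ?thesis
    using sum.swap_restrict[OF assms assms, of f "\<lambda>l l'. l \<noteq> l'"] by simp
qed

lemma milnor_mono_anticomm:
  assumes "finite S"
  shows "lin_ext (milnor_mono p i) (milnor_mono p j (a, S)) =
           - lin_ext (milnor_mono p j) (milnor_mono p i (a, S) :: 'a::comm_ring_1 coh)"
proof -
  let ?t = "\<lambda>i j l l'. single (a + single l (p ^ j) + single l' (p ^ i), S - {l} - {l'})
                          (of_int (koszul_sign S l * koszul_sign (S - {l}) l')) :: 'a coh"
  have "lin_ext (milnor_mono p j) (milnor_mono p i (a, S)) = (\<Sum>l\<in>S. \<Sum>l'\<in>S - {l}. ?t j i l l')"
    by (simp add: milnor_mono_pair lin_ext_sum smul_sum mult.commute)
  also have "\<dots> = (\<Sum>l'\<in>S. \<Sum>l\<in>S - {l'}. ?t j i l l')"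
    by (rule sum_swap_off_diagonal[OF assms])
  also have "\<dots> = (\<Sum>l\<in>S. \<Sum>l'\<in>S - {l}. - ?t i j l l')"
  proof (intro sum.cong refl)
    fix l l' assume "l \<in> S" "l' \<in> S - {l}"
    then have "koszul_sign S l' * koszul_sign (S - {l'}) l = - (koszul_sign S l * koszul_sign (S - {l}) l')"
      using koszul_sign_swap[OF assms, of l l'] by auto
    moreover have "S - {l'} - {l} = S - {l} - {l'}"
      by auto
    ultimately show "?t j i l' l = - ?t i j l l'"
      by (simp add: ac_simps single_uminus)
  qed
  also have "\<dots> = - lin_ext (milnor_mono p i) (milnor_mono p j (a, S))"
    by (simp add: milnor_mono_pair lin_ext_sum smul_sum sum_negf mult.commute)
  finally show ?thesis
    by simp
qed

definition exterior_homogeneous :: "nat \<Rightarrow> nat \<Rightarrow> 'a::ring_1 coh \<Rightarrow> bool" where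
  "exterior_homogeneous n k x \<longleftrightarrow> (\<forall>m\<in>keys x. snd m \<subseteq> {..<n} \<and> card (snd m) = k)"

lemma exterior_homogeneousD:
  assumes "exterior_homogeneous n k x" "m \<in> keys x"
  shows "snd m \<subseteq> {..<n}" "finite (snd m)" "card (snd m) = k"
  using assms unfolding exterior_homogeneous_def by (auto intro: finite_subset)

lemma exterior_homogeneous_u: "exterior_homogeneous n n (u n :: 'a::ring_1 coh)"
  by (simp add: exterior_homogeneous_def u_def)

lemma keys_milnor_mono:
  "keys (milnor_mono p i m :: 'a::ring_1 coh) \<subseteq> (\<Union>j\<in>snd m. {(fst m + single j (p ^ i), snd m - {j})})"
proof -
  have "keys (milnor_mono p i m :: 'a coh) \<subseteq>
          (\<Union>j\<in>snd m. keys (single (fst m + single j (p ^ i), snd m - {j}) (of_int (koszul_sign (snd m) j) :: 'a)))"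
    unfolding milnor_mono_def by (rule keys_sum)
  also have "\<dots> \<subseteq> (\<Union>j\<in>snd m. {(fst m + single j (p ^ i), snd m - {j})})"
    by (rule UN_mono) auto
  finally show ?thesis .
qed

lemma exterior_homogeneous_milnor:
  assumes "exterior_homogeneous n k x"
  shows "exterior_homogeneous n (k - 1) (lin_ext (milnor_mono p i) (x :: 'a::ring_1 coh))"
  unfolding exterior_homogeneous_def
proof
  fix m' assume "m' \<in> keys (lin_ext (milnor_mono p i) x)"
  then obtain m where m: "m \<in> keys x" and "m' \<in> keys (milnor_mono p i m :: 'a coh)"
    using keys_lin_ext by blast
  then obtain j where "j \<in> snd m" and "m' = (fst m + single j (p ^ i), snd m - {j})"
    using keys_milnor_mono by blast
  then show "snd m' \<subseteq> {..<n} \<and> card (snd m') = k - 1"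
    using exterior_homogeneousD[OF assms m] by auto
qed

lemma milnor_cmult:
  assumes hx: "exterior_homogeneous n k x" and hy: "exterior_homogeneous n l y"
  shows "lin_ext (milnor_mono p i) (cmult x y) =
           cmult (lin_ext (milnor_mono p i) x) y
           + smul ((-1) ^ k) (cmult x (lin_ext (milnor_mono p i) (y :: 'a::comm_ring_1 coh)))"
proof -
  let ?Q = "lin_ext (milnor_mono p i) :: 'a coh \<Rightarrow> 'a coh"
  let ?A = "\<lambda>m m'. lin_ext (\<lambda>k. mono_mult k m') (milnor_mono p i m) :: 'a coh"
  let ?B = "\<lambda>m m'. lin_ext (\<lambda>k. mono_mult m k) (milnor_mono p i m') :: 'a coh"
  have "?Q (cmult x y) = lin_ext (\<lambda>m. lin_ext (\<lambda>m'. ?Q (mono_mult m m')) y) x"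
    by (simp add: cmult_eq_lin_ext lin_ext_comp)
  also have "\<dots> = lin_ext (\<lambda>m. lin_ext (\<lambda>m'. ?A m m' + smul ((-1) ^ k) (?B m m')) y) x"
  proof (intro lin_ext_cong)
    fix m m' assume m: "m \<in> keys x" and m': "m' \<in> keys y"
    show "?Q (mono_mult m m') = ?A m m' + smul ((-1) ^ k) (?B m m')"
      using milnor_mono_mult[of "snd m" "snd m'" p i "fst m" "fst m'"]
        exterior_homogeneousD[OF hx m] exterior_homogeneousD[OF hy m'] by simp
  qed
  also have "\<dots> = lin_ext (\<lambda>m. lin_ext (\<lambda>m'. ?A m m') y) x
                   + smul ((-1) ^ k) (lin_ext (\<lambda>m. lin_ext (\<lambda>m'. ?B m m') y) x)"
    by (simp add: lin_ext_fun_add lin_ext_fun_smul)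
  also have "lin_ext (\<lambda>m. lin_ext (\<lambda>m'. ?A m m') y) x = cmult (?Q x) y"
    by (simp add: cmult_eq_lin_ext lin_ext_comp lin_ext_swap[of _ y])
  also have "lin_ext (\<lambda>m. lin_ext (\<lambda>m'. ?B m m') y) x = cmult x (?Q y)"
    by (simp add: cmult_eq_lin_ext lin_ext_comp)
  finally show ?thesis .
qed

lemma cmult_commute_homogeneous:
  assumes hx: "exterior_homogeneous n k x" and hy: "exterior_homogeneous n l y"
  shows "cmult x y = smul ((-1) ^ (k * l)) (cmult y (x :: 'a::comm_ring_1 coh))"
proof -
  have "cmult x y = lin_ext (\<lambda>m. lin_ext (\<lambda>m'. smul ((-1) ^ (k * l)) (mono_mult m' m)) y) x"
    unfolding cmult_eq_lin_ext
  proof (intro lin_ext_cong)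
    fix m m' assume m: "m \<in> keys x" and m': "m' \<in> keys y"
    obtain a S b T where mm': "m = (a, S)" "m' = (b, T)"
      by (cases m, cases m')
    have "finite S" "card S = k" "finite T" "card T = l"
      using exterior_homogeneousD[OF hx m] exterior_homogeneousD[OF hy m'] mm' by auto
    then show "mono_mult m m' = smul ((-1) ^ (k * l)) (mono_mult m' m :: 'a coh)"
      unfolding mm' mono_mult_pair
      by (cases "S \<inter> T = {}") (auto simp: sgn_swap[of S T] Int_commute Un_commute add.commute mult.commute)
  qed
  also have "\<dots> = smul ((-1) ^ (k * l)) (cmult y x)"
    by (simp add: cmult_eq_lin_ext lin_ext_fun_smul lin_ext_swap[of _ y])
  finally show ?thesis .
qed

lemma milnor_anticomm:
  assumes "exterior_homogeneous n k x"
  shows "lin_ext (milnor_mono p i) (lin_ext (milnor_mono p j) x) =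
           - lin_ext (milnor_mono p j) (lin_ext (milnor_mono p i) (x :: 'a::comm_ring_1 coh))"
proof -
  have "lin_ext (milnor_mono p i) (lin_ext (milnor_mono p j) x) =
          lin_ext (\<lambda>m. - lin_ext (milnor_mono p j) (milnor_mono p i m)) x"
    unfolding lin_ext_comp
  proof (rule lin_ext_cong)
    fix m assume "m \<in> keys x"
    then show "lin_ext (milnor_mono p i) (milnor_mono p j m) = - lin_ext (milnor_mono p j) (milnor_mono p i m :: 'a coh)"
      using milnor_mono_anticomm[of "snd m" p i j "fst m"] exterior_homogeneousD[OF assms] by simp
  qed
  then show ?thesis
    by (simp add: lin_ext_fun_uminus lin_ext_comp)
qed

lemma cmult_u_left_eq_0:
  assumes "exterior_homogeneous n k w" "k \<ge> 1"
  shows "cmult (u n) w = (0 :: 'a::comm_ring_1 coh)"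
proof -
  have "cmult (u n) w = lin_ext (\<lambda>m'. mono_mult (0, {..<n}) m') w"
    by (simp add: cmult_eq_lin_ext u_def)
  also have "\<dots> = lin_ext (\<lambda>m'. 0) w"
  proof (rule lin_ext_cong)
    fix m' assume "m' \<in> keys w"
    then have "snd m' \<subseteq> {..<n}" "card (snd m') = k"
      using exterior_homogeneousD[OF assms(1)] by blast+
    then have "snd m' \<subseteq> {..<n}" "snd m' \<noteq> {}"
      using assms(2) by auto
    then show "mono_mult (0, {..<n}) m' = (0 :: 'a coh)"
      by (auto simp: mono_mult_def)
  qed
  finally show ?thesis
    by (simp add: lin_ext_fun_zero)
qed

section \<open>The classes \<open>Q\<^sub>I u\<^sub>n\<close>\<close>

lemma QI_empty: "QI p n {} = u n"
  by (simp add: QI_def)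

lemma QI_Min:
  assumes "finite I" "I \<noteq> {}"
  shows "QI p n I = milnorQ p (Min I) (QI p n (I - {Min I}))"
  using assms by (simp add: QI_def sorted_list_of_set_nonempty)

context
  assumes prime_char: "prime CHAR('a::comm_ring_1)"
begin

lemma exterior_homogeneous_QI:
  assumes "finite I"
  shows "exterior_homogeneous n (n - card I) (QI CHAR('a) n I :: 'a coh)"
  using assms
proof (induction "card I" arbitrary: I rule: less_induct)
  case less
  show ?case
  proof (cases "I = {}")
    case True
    then show ?thesis
      by (simp add: QI_empty exterior_homogeneous_u)
  next
    case False
    then have "Min I \<in> I" "card I > 0"
      using less.prems by (simp_all add: card_gt_0_iff)
    then have "card (I - {Min I}) < card I" "n - card (I - {Min I}) - 1 = n - card I"
      using less.prems by (simp_all add: card_Diff1_less card_Diff_singleton)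
    moreover have "exterior_homogeneous n (n - card (I - {Min I})) (QI CHAR('a) n (I - {Min I}) :: 'a coh)"
      using less.hyps[of "I - {Min I}"] less.prems calculation by simp
    ultimately show ?thesis
      using exterior_homogeneous_milnor[of n "n - card (I - {Min I})" _ "CHAR('a)" "Min I"]
      by (simp add: QI_Min[OF less.prems False] milnorQ_eq_lin_ext[OF prime_char])
  qed
qed

lemma milnorQ_cmult:
  assumes "exterior_homogeneous n k x" "exterior_homogeneous n l y"
  shows "milnorQ CHAR('a) i (cmult x y) =
           cmult (milnorQ CHAR('a) i x) y + smul ((-1) ^ k) (cmult x (milnorQ CHAR('a) i (y :: 'a coh)))"
  unfolding milnorQ_eq_lin_ext[OF prime_char] using assms by (rule milnor_cmult)

lemma QI_remove:
  assumes "finite I" "i \<in> I"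
  shows "(QI CHAR('a) n I :: 'a coh) =
           smul (of_int ((-1) ^ card {l\<in>I. l < i})) (milnorQ CHAR('a) i (QI CHAR('a) n (I - {i})))"
  using assms
proof (induction "card I" arbitrary: I rule: less_induct)
  case less
  let ?Q = "milnorQ CHAR('a) :: nat \<Rightarrow> 'a coh \<Rightarrow> 'a coh"
  let ?X = "QI CHAR('a) n :: nat set \<Rightarrow> 'a coh"
  define i0 where "i0 = Min I"
  have "I \<noteq> {}"
    using less.prems by auto
  then have i0: "i0 \<in> I" "\<forall>l\<in>I. i0 \<le> l" and XI: "?X I = ?Q i0 (?X (I - {i0}))"
    unfolding i0_def using less.prems QI_Min by auto
  show ?case
  proof (cases "i = i0")
    case True
    have "card {l\<in>I. l < i0} = 0"
      using i0 by (auto simp: card_eq_0_iff not_less)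
    then show ?thesis
      unfolding True using XI by (simp only: power_0 of_int_1 smul_one)
  next
    case False
    let ?I' = "I - {i0}"
    have "i0 < i" "i \<in> ?I'"
      using i0 less.prems False by (auto simp: order.order_iff_strict)
    have "card ?I' < card I"
      by (rule card_Diff1_less[OF less.prems(1) i0(1)])
    then have IH: "?X ?I' = smul (of_int ((-1) ^ card {l\<in>?I'. l < i})) (?Q i (?X (?I' - {i})))"
      using less.hyps[of ?I'] less.prems \<open>i \<in> ?I'\<close> by blast
    have "Min (I - {i}) = i0" "I - {i} \<noteq> {}" "I - {i} - {i0} = ?I' - {i}"
      using i0 False less.prems by (auto intro!: Min_eqI)
    then have X2: "?X (I - {i}) = ?Q i0 (?X (?I' - {i}))"
      using QI_Min[of "I - {i}" "CHAR('a)" n] less.prems by simp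
    have "card {l\<in>I. l < i} = card {l\<in>?I'. l < i} + 1"
      using card_less_remove_less[OF less.prems(1) i0(1) \<open>i0 < i\<close>] by simp
    moreover have "?X I = smul (of_int ((-1) ^ card {l\<in>?I'. l < i})) (?Q i0 (?Q i (?X (?I' - {i}))))"
      using XI IH by (simp add: milnorQ_eq_lin_ext[OF prime_char] lin_ext_smul)
    moreover have "?Q i0 (?Q i (?X (?I' - {i}))) = - ?Q i (?X (I - {i}))"
      using milnor_anticomm[OF exterior_homogeneous_QI[of "?I' - {i}" n], where p = "CHAR('a)" and i = i0 and j = i]
        X2 less.prems
      by (simp add: milnorQ_eq_lin_ext[OF prime_char])
    ultimately show ?thesis
      by (simp add: smul_uminus smul_uminus_left[symmetric])
  qed
qed

lemma milnorQ_QI_not_mem: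
  assumes "finite I" "i \<notin> I"
  shows "milnorQ CHAR('a) i (QI CHAR('a) n I) =
           smul (of_int ((-1) ^ card {l\<in>I. l < i})) (QI CHAR('a) n (insert i I) :: 'a coh)"
proof -
  have "{l\<in>insert i I. l < i} = {l\<in>I. l < i}" "insert i I - {i} = I"
    using assms(2) by auto
  then have "smul (of_int ((-1) ^ card {l\<in>I. l < i})) (QI CHAR('a) n (insert i I) :: 'a coh) =
               smul (of_int ((-1) ^ (2 * card {l\<in>I. l < i}))) (milnorQ CHAR('a) i (QI CHAR('a) n I))"
    using QI_remove[of "insert i I" i n] assms(1) by (simp add: power_add mult_2)
  then show ?thesis
    by simp
qed

context
  assumes odd_char: "CHAR('a) > 2"
begin

text \<open>In odd characteristic \<open>2\<close> is invertible, with inverse \<open>(p + 1) / 2\<close>.\<close>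
lemma eq_0_if_eq_uminus:
  assumes "y = - y"
  shows "y = (0 :: 'a coh)"
proof (rule poly_mapping_eqI)
  fix m
  let ?h = "of_nat ((CHAR('a) + 1) div 2) :: 'a"
  have "even (CHAR('a) + 1)"
    using prime_odd_nat[OF prime_char odd_char] by simp
  then have "?h * 2 = of_nat (CHAR('a) + 1)"
    by (metis dvd_div_mult_self of_nat_mult of_nat_numeral)
  then have h: "?h * 2 = 1"
    by simp
  have "lookup y m = - lookup y m"
    using arg_cong[OF assms, of "\<lambda>z. lookup z m"] by (simp only: lookup_uminus)
  then have two: "2 * lookup y m = 0"
    by (simp only: eq_neg_iff_add_eq_0 mult_2)
  have "lookup y m = (?h * 2) * lookup y m"
    by (simp only: h mult_1)
  also have "\<dots> = 0"
    by (simp only: mult.assoc two mult_zero_right)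
  finally show "lookup y m = lookup 0 m"
    by simp
qed

lemma milnorQ_milnorQ_eq_0:
  assumes "exterior_homogeneous n k x"
  shows "milnorQ CHAR('a) i (milnorQ CHAR('a) i x) = (0 :: 'a coh)"
  unfolding milnorQ_eq_lin_ext[OF prime_char]
  by (rule eq_0_if_eq_uminus) (rule milnor_anticomm[OF assms])

lemma milnorQ_QI_mem:
  assumes "finite I" "i \<in> I"
  shows "milnorQ CHAR('a) i (QI CHAR('a) n I) = (0 :: 'a coh)"
  using milnorQ_milnorQ_eq_0[OF exterior_homogeneous_QI[of "I - {i}" n]] assms
  by (simp add: QI_remove[OF assms] milnorQ_eq_lin_ext[OF prime_char] lin_ext_smul)

section \<open>The product formula\<close>

text \<open>Peel off \<open>Q\<^sub>i\<close> with \<open>i = min I \<in> J\<close> by the Leibniz rule; \<open>Q\<^sub>i Q\<^sub>J u\<^sub>n = 0\<close> kills the second term, and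
  at \<open>I = {}\<close> the product \<open>u\<^sub>n \<cdot> Q\<^sub>J u\<^sub>n\<close> vanishes since \<open>Q\<^sub>J u\<^sub>n\<close> still has exterior factors.\<close>
lemma cmult_QI_subset_eq_0:
  assumes "I \<subseteq> J" "J \<subseteq> {..<n}" "J \<noteq> {..<n}"
  shows "cmult (QI CHAR('a) n I) (QI CHAR('a) n J) = (0 :: 'a coh)"
  using assms(1)
proof (induction "card I" arbitrary: I rule: less_induct)
  case less
  let ?X = "QI CHAR('a) n :: nat set \<Rightarrow> 'a coh"
  have "finite J"
    using assms(2) by (rule finite_subset) simp
  then have "finite I"
    using less.prems by (rule finite_subset[rotated])
  have hJ: "exterior_homogeneous n (n - card J) (?X J)"
    using \<open>finite J\<close> by (rule exterior_homogeneous_QI)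
  show ?case
  proof (cases "I = {}")
    case True
    have "card J < n"
      using assms(2,3) psubset_card_mono[of "{..<n}" J] by auto
    then show ?thesis
      using True cmult_u_left_eq_0[OF hJ] by (simp add: QI_empty)
  next
    case False
    let ?i = "Min I"
    have "?i \<in> I"
      using \<open>finite I\<close> False by simp
    then have "cmult (?X (I - {?i})) (?X J) = 0"
      using less.hyps[OF card_Diff1_less[OF \<open>finite I\<close>]] less.prems by blast
    moreover have "milnorQ CHAR('a) ?i (?X J) = 0"
      using milnorQ_QI_mem[OF \<open>finite J\<close>] \<open>?i \<in> I\<close> less.prems by blast
    moreover have "exterior_homogeneous n (n - card (I - {?i})) (?X (I - {?i}))"
      using \<open>finite I\<close> by (intro exterior_homogeneous_QI) simp
    note milnorQ_cmult[OF this hJ, where i = ?i]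
    ultimately show ?thesis
      unfolding QI_Min[OF \<open>finite I\<close> False] by (simp add: milnorQ_eq_lin_ext[OF prime_char])
  qed
qed

lemma cmult_QI_subset:
  assumes "I \<subseteq> J" "J \<subseteq> {..<n}"
  shows "(I \<union> J \<noteq> {..<n} \<longrightarrow> cmult (QI CHAR('a) n I) (QI CHAR('a) n J) = (0 :: 'a coh))
       \<and> (I \<union> J = {..<n} \<longrightarrow> cmult (QI CHAR('a) n I) (QI CHAR('a) n J) =
            smul (of_int (product_sign n I J)) (cmult (QI CHAR('a) n {..<n}) (QI CHAR('a) n (I \<inter> J)) :: 'a coh))"
proof (cases "J = {..<n}")
  case True
  have "finite I"
    using assms by (simp add: finite_subset)
  have "exterior_homogeneous n (n - card I) (QI CHAR('a) n I :: 'a coh)"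
    using \<open>finite I\<close> by (rule exterior_homogeneous_QI)
  moreover have "exterior_homogeneous n 0 (QI CHAR('a) n J :: 'a coh)"
    using exterior_homogeneous_QI[of J n] True by simp
  ultimately have "cmult (QI CHAR('a) n I) (QI CHAR('a) n J) = (cmult (QI CHAR('a) n J) (QI CHAR('a) n I) :: 'a coh)"
    by (simp add: cmult_commute_homogeneous[of n _ _ 0])
  moreover have "I \<inter> J = I" "I \<union> J = J"
    using assms(1) by auto
  ultimately show ?thesis
    using True product_sign_subset[OF assms(1)] by simp
next
  case False
  moreover have "I \<union> J = J"
    using assms(1) by auto
  ultimately show ?thesis
    using cmult_QI_subset_eq_0[OF assms] by simp
qed

lemma cmult_QI_move:
  assumes "finite I" "finite J" "i \<in> I" "i \<notin> J"
    and "cmult (QI CHAR('a) n (I - {i})) (QI CHAR('a) n J) = (0 :: 'a coh)"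
  shows "cmult (QI CHAR('a) n I) (QI CHAR('a) n J) =
           smul (of_int ((-1) ^ card {l\<in>I. l < i} * (- ((-1) ^ (n - card (I - {i})))) * (-1) ^ card {l\<in>J. l < i}))
                (cmult (QI CHAR('a) n (I - {i})) (QI CHAR('a) n (insert i J)) :: 'a coh)"
proof -
  let ?X = "QI CHAR('a) n :: nat set \<Rightarrow> 'a coh"
  let ?Q = "milnorQ CHAR('a) :: nat \<Rightarrow> 'a coh \<Rightarrow> 'a coh"
  have "?Q i (cmult (?X (I - {i})) (?X J)) = cmult (?Q i (?X (I - {i}))) (?X J)
          + smul ((-1) ^ (n - card (I - {i}))) (cmult (?X (I - {i})) (?Q i (?X J)))"
    using milnorQ_cmult[OF exterior_homogeneous_QI[of "I - {i}" n] exterior_homogeneous_QI[of J n]] assms(1,2)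
    by simp
  then have "cmult (?Q i (?X (I - {i}))) (?X J) =
               - smul ((-1) ^ (n - card (I - {i}))) (cmult (?X (I - {i})) (?Q i (?X J)))"
    using assms(5) by (simp add: milnorQ_eq_lin_ext[OF prime_char] eq_neg_iff_add_eq_0)
  then show ?thesis
    by (simp add: QI_remove[OF assms(1,3)] milnorQ_QI_not_mem[OF assms(2,4)] cmult_smul_left
                  cmult_smul_right smul_uminus smul_uminus_left[symmetric] mult.commute mult.left_commute)
qed

lemma cmult_QI_QI:
  assumes "I \<subseteq> {..<n}" "J \<subseteq> {..<n}"
  shows "(I \<union> J \<noteq> {..<n} \<longrightarrow> cmult (QI CHAR('a) n I) (QI CHAR('a) n J) = (0 :: 'a coh))
       \<and> (I \<union> J = {..<n} \<longrightarrow> cmult (QI CHAR('a) n I) (QI CHAR('a) n J) =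
            smul (of_int (product_sign n I J)) (cmult (QI CHAR('a) n {..<n}) (QI CHAR('a) n (I \<inter> J)) :: 'a coh))"
  using assms
proof (induction "card (I - J)" arbitrary: I J)
  case 0
  then have "I \<subseteq> J"
    using finite_subset by fastforce
  then show ?case
    using "0.prems"(2) by (rule cmult_QI_subset)
next
  case (Suc r)
  let ?X = "QI CHAR('a) n :: nat set \<Rightarrow> 'a coh"
  have "finite I" "finite J"
    using Suc.prems finite_subset by blast+
  obtain i where "i \<in> I" "i \<notin> J"
    using Suc.hyps(2) by (metis Diff_eq_empty_iff card.empty nat.distinct(1) subsetI)
  let ?I' = "I - {i}"
  have "I - {i} - J = I - J - {i}" "I - {i} - insert i J = I - J - {i}"
    by auto
  then have card: "card (?I' - J) = r" "card (?I' - insert i J) = r"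
    using Suc.hyps(2) \<open>i \<in> I\<close> \<open>i \<notin> J\<close> \<open>finite I\<close> by simp_all
  have sub: "?I' \<subseteq> {..<n}" "insert i J \<subseteq> {..<n}"
    using Suc.prems \<open>i \<in> I\<close> by auto
  have sets: "?I' \<union> insert i J = I \<union> J" "?I' \<inter> insert i J = I \<inter> J" "?I' \<union> J \<noteq> {..<n}"
    using \<open>i \<in> I\<close> \<open>i \<notin> J\<close> Suc.prems by auto
  have "cmult (?X ?I') (?X J) = 0"
    using Suc.hyps(1)[OF card(1)[symmetric] sub(1) Suc.prems(2)] sets(3) by blast
  note move = cmult_QI_move[OF \<open>finite I\<close> \<open>finite J\<close> \<open>i \<in> I\<close> \<open>i \<notin> J\<close> this]
  show ?case
    using Suc.hyps(1)[OF card(2)[symmetric] sub] move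
      product_sign_move[OF \<open>finite I\<close> \<open>finite J\<close> Suc.prems(1) \<open>i \<in> I\<close> \<open>i \<notin> J\<close>]
    unfolding sets(1,2) by (simp add: mult.assoc)
qed

end

end

theorem lemma3p1:
  fixes n :: nat and I J :: "nat set"
  assumes "n \<ge> 1" and "CARD('p::prime_card) > 2"
    and "I \<subseteq> {..<n}" and "J \<subseteq> {..<n}"
  shows "(I \<union> J \<noteq> {..<n} \<longrightarrow>
           cmult (QI CARD('p) n I) (QI CARD('p) n J) = (0 :: 'p mod_ring coh))
       \<and> (I \<union> J = {..<n} \<longrightarrow>
           cmult (QI CARD('p) n I) (QI CARD('p) n J) =
             smul (of_int ((-1) ^ (n * card (I - I \<inter> J) + (card (I - I \<inter> J))\<^sup>2)
                     * sgn (I \<inter> J) (I - I \<inter> J) * sgn (I - I \<inter> J) J))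
                  (cmult (e CARD('p) n) (QI CARD('p) n (I \<inter> J) :: 'p mod_ring coh)))"
  using cmult_QI_QI[where 'a = "'p mod_ring", OF _ _ assms(3,4)] prime_card[where 'a = 'p] assms(2)
  by (simp add: e_def product_sign_def)

end
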